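(* Let $G$ be a closed, connected, self adjoint, noncompact subgroup of $GL(n,\mathbb{R})$ and let $v\in\mathbb{R}^n$ be a nonzero minimal vector such that $G(v)$ is unbounded. Then $0<\lambda_X(v)\le 1$ for every $X\in\widetilde{\mathfrak{P}_v}$ with $|X|=1$.
   Context: $\langle A,B\rangle=\mathrm{trace}(AB^t)$, $|A|^2=\langle A,A\rangle$. $v$ is minimal if $|g(v)|\ge|v|$ for all $g\in G$. $\mathfrak{G}$ is the Lie algebra of $G$, $\mathfrak{K}$ and $\mathfrak{P}$ its skew-symmetric and symmetric elements, $\mathfrak{G}_v=\{X\in\mathfrak{G}:X(v)=0\}$, $\widetilde{\mathfrak{P}_v}=(\mathfrak{K}+\mathfrak{G}_v)^\perp\subset\mathfrak{P}$. For nonzero $X\in\mathfrak{P}$, $\lambda_X(v)$ is the largest eigenvalue of $X$ such that $v$ has a nonzero component in the corresponding eigenspace. *)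

theory Defs
  imports "HOL-Analysis.Analysis"
begin

type_synonym 'n mat = "real^'n^'n"

primrec mat_pow :: "'n::finite mat \<Rightarrow> nat \<Rightarrow> 'n mat" where
  "mat_pow A 0 = mat 1"
| "mat_pow A (Suc k) = A ** mat_pow A k"

text \<open>Matrix exponential (the componentwise exp on vectors is NOT the matrix exponential).\<close>
definition mat_exp :: "'n::finite mat \<Rightarrow> 'n mat" where
  "mat_exp A = (\<Sum>k. (1 / fact k) *\<^sub>R mat_pow A k)"

definition mat_inner :: "'n::finite mat \<Rightarrow> 'n mat \<Rightarrow> real" where
  "mat_inner A B = trace (A ** transpose B)"

definition mat_norm :: "'n::finite mat \<Rightarrow> real" where
  "mat_norm A = sqrt (mat_inner A A)"

definition closed_subgroup_GL :: "'n::finite mat set \<Rightarrow> bool" where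
  "closed_subgroup_GL G \<longleftrightarrow>
     G \<subseteq> {A. invertible A} \<and> mat 1 \<in> G \<and>
     (\<forall>A\<in>G. \<forall>B\<in>G. A ** B \<in> G) \<and> (\<forall>A\<in>G. matrix_inv A \<in> G) \<and>
     closedin (top_of_set {A. invertible A}) G"

definition self_adjoint_set :: "'n::finite mat set \<Rightarrow> bool" where
  "self_adjoint_set G \<longleftrightarrow> (\<forall>A\<in>G. transpose A \<in> G)"

definition minimal_vector :: "'n::finite mat set \<Rightarrow> real^'n \<Rightarrow> bool" where
  "minimal_vector G v \<longleftrightarrow> (\<forall>g\<in>G. norm (g *v v) \<ge> norm v)"

definition lie_alg :: "'n::finite mat set \<Rightarrow> 'n mat set" where
  "lie_alg G = {X. \<forall>t::real. mat_exp (t *\<^sub>R X) \<in> G}"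

definition lie_K :: "'n::finite mat set \<Rightarrow> 'n mat set" where
  "lie_K G = {X \<in> lie_alg G. transpose X = - X}"

definition lie_P :: "'n::finite mat set \<Rightarrow> 'n mat set" where
  "lie_P G = {X \<in> lie_alg G. transpose X = X}"

definition lie_stab :: "'n::finite mat set \<Rightarrow> real^'n \<Rightarrow> 'n mat set" where
  "lie_stab G v = {X \<in> lie_alg G. X *v v = 0}"

definition P_tilde :: "'n::finite mat set \<Rightarrow> real^'n \<Rightarrow> 'n mat set" where
  "P_tilde G v = {X \<in> lie_P G. \<forall>A\<in>lie_K G. \<forall>B\<in>lie_stab G v. mat_inner X (A + B) = 0}"

text \<open>Eigenvalues c of X for which v has a nonzero component in the c-eigenspace
  (for symmetric X the component is the orthogonal projection, which is nonzero iff
  v is not orthogonal to the eigenspace); lambda_X(v) is the largest one.\<close>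
definition relevant_eigenvalues :: "'n::finite mat \<Rightarrow> real^'n \<Rightarrow> real set" where
  "relevant_eigenvalues X v = {c. \<exists>w. X *v w = c *\<^sub>R w \<and> v \<bullet> w \<noteq> 0}"

definition lambda_X :: "'n::finite mat \<Rightarrow> real^'n \<Rightarrow> real" where
  "lambda_X X v = Max (relevant_eigenvalues X v)"

end

theory Submission
  imports Defs
begin

(*
  Proof of Proposition 7.6.  Fix X in P_tilde G v with |X| = 1.  Only three
  facts about X are needed:
   (a) X v <> 0: otherwise X lies in the stabiliser algebra G_v and, being
       orthogonal to K + G_v, is orthogonal to itself, so X = 0;
   (b) every eigenvalue c of X satisfies |c| <= |X| = 1, since the Frobenius
       norm dominates the operator norm;
   (c) exp X lies in G, so |exp(X) v| >= |v| by minimality of v.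
  Writing v = sum of eigencomponents w_c of the symmetric matrix X (spectral
  theorem), lambda_X(v) is the largest c with w_c <> 0, which gives the upper
  bound by (b).  If all such c were <= 0, then by (a) one of them is negative
  and |exp(X) v|^2 = sum exp(2c) |w_c|^2 < sum |w_c|^2 = |v|^2, contradicting (c).
  The argument uses only that G contains the identity and that v is minimal.
*)

lemma norm_vector_squared: "norm (x::'a::real_normed_vector^'n) ^ 2 = (\<Sum>j\<in>UNIV. norm (x$j) ^ 2)"
  by (simp add: norm_vec_def L2_set_def sum_nonneg)

lemma norm_matrix_squared: "norm (A::real^'n^'m) ^ 2 = (\<Sum>i\<in>UNIV. \<Sum>j\<in>UNIV. (A$i$j)^2)"
  by (simp add: norm_vector_squared)

lemma mat_norm_eq_norm: "mat_norm (X::real^'n^'n) = norm X"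
proof -
  have "mat_inner X X = (\<Sum>i\<in>UNIV. \<Sum>j\<in>UNIV. (X$i$j)^2)"
    by (simp add: mat_inner_def trace_def matrix_matrix_mult_def transpose_def power2_eq_square)
  then have "mat_inner X X = norm X ^ 2" by (simp add: norm_matrix_squared)
  then show ?thesis by (simp add: mat_norm_def)
qed

(* The Frobenius norm bounds the operator norm (Cauchy-Schwarz on each row). *)
lemma norm_matrix_vector_mult_le: "norm ((A::real^'n^'m) *v x) \<le> norm A * norm x"
proof -
  have "norm (A *v x) ^ 2 = (\<Sum>i\<in>UNIV. (A$i \<bullet> x)^2)"
    by (simp add: norm_vector_squared matrix_vector_mult_def inner_vec_def mult.commute)
  also have "\<dots> \<le> (\<Sum>i\<in>UNIV. norm (A$i) ^ 2 * norm x ^ 2)"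
  proof (rule sum_mono)
    fix i
    have "\<bar>A$i \<bullet> x\<bar> \<le> norm (A$i) * norm x" by (rule Cauchy_Schwarz_ineq2)
    then have "\<bar>A$i \<bullet> x\<bar>^2 \<le> (norm (A$i) * norm x)^2" by (meson abs_ge_zero power_mono)
    then show "(A$i \<bullet> x)^2 \<le> norm (A$i) ^ 2 * norm x ^ 2" by (simp add: power_mult_distrib)
  qed
  also have "\<dots> = (norm A * norm x) ^ 2"
    by (simp add: sum_distrib_right[symmetric] norm_vector_squared[of A] power_mult_distrib)
  finally show ?thesis by (rule power2_le_imp_le) simp
qed

lemma norm_transpose: "norm (transpose (A::real^'n^'m)) = norm A"
proof -
  have "norm (transpose A) ^ 2 = (\<Sum>i\<in>UNIV. \<Sum>j\<in>UNIV. (A$j$i)^2)"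
    by (simp add: norm_matrix_squared transpose_def)
  also have "\<dots> = (\<Sum>j\<in>UNIV. \<Sum>i\<in>UNIV. (A$j$i)^2)" by (rule sum.swap)
  also have "\<dots> = norm A ^ 2" by (simp add: norm_matrix_squared)
  finally show ?thesis by (metis norm_ge_zero power2_eq_iff_nonneg)
qed

(* Submultiplicativity, applied column by column through the transpose. *)
lemma norm_matrix_mult_le: "norm ((A::real^'n^'m) ** (B::real^'k^'n)) \<le> norm A * norm B"
proof -
  have col: "transpose (A ** B) $ j = A *v (transpose B $ j)" for j
    by (simp add: vec_eq_iff matrix_matrix_mult_def matrix_vector_mult_def transpose_def)
  have "norm (A ** B) ^ 2 = norm (transpose (A ** B)) ^ 2" by (simp only: norm_transpose)
  also have "\<dots> = (\<Sum>j\<in>UNIV. norm (A *v (transpose B $ j)) ^ 2)"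
    by (simp only: norm_vector_squared[of "transpose (A ** B)"] col)
  also have "\<dots> \<le> (\<Sum>j\<in>UNIV. (norm A * norm (transpose B $ j)) ^ 2)"
    by (intro sum_mono power_mono norm_matrix_vector_mult_le norm_ge_zero)
  also have "\<dots> = norm A ^ 2 * norm (transpose B) ^ 2"
    by (simp only: power_mult_distrib sum_distrib_left[symmetric] norm_vector_squared[of "transpose B", symmetric])
  also have "\<dots> = (norm A * norm B) ^ 2" by (simp only: norm_transpose power_mult_distrib)
  finally show ?thesis by (rule power2_le_imp_le) simp
qed

lemma norm_mat_pow_le: "norm (mat_pow (X::'n::finite mat) k) \<le> norm (mat 1 :: 'n mat) * norm X ^ k"
proof (induction k)
  case (Suc k)
  have "norm (mat_pow X (Suc k)) \<le> norm X * norm (mat_pow X k)"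
    by (simp add: norm_matrix_mult_le)
  also have "\<dots> \<le> norm X * (norm (mat 1 :: 'n mat) * norm X ^ k)"
    using Suc by (simp add: mult_left_mono)
  finally show ?case by (simp add: algebra_simps)
qed simp

lemma summable_mat_exp: "summable (\<lambda>k. (1 / fact k) *\<^sub>R mat_pow (X::'n::finite mat) k)"
proof (rule summable_comparison_test)
  show "summable (\<lambda>k. norm (mat 1 :: 'n mat) * (inverse (fact k) * norm X ^ k))"
    by (intro summable_mult summable_exp)
  have "norm ((1 / fact k) *\<^sub>R mat_pow X k) \<le> norm (mat 1 :: 'n mat) * (inverse (fact k) * norm X ^ k)"
    for k :: nat
  proof -
    have "norm ((1 / fact k) *\<^sub>R mat_pow X k) = norm (mat_pow X k) / fact k" by simp
    also have "\<dots> \<le> norm (mat 1 :: 'n mat) * norm X ^ k / fact k"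
      by (rule divide_right_mono[OF norm_mat_pow_le]) simp
    finally show ?thesis by (simp add: field_simps)
  qed
  then show "\<exists>N. \<forall>k\<ge>N. norm ((1 / fact k) *\<^sub>R mat_pow X k) \<le> norm (mat 1 :: 'n mat) * (inverse (fact k) * norm X ^ k)"
    by blast
qed

lemma mat_pow_eigenvector:
  assumes "X *v u = c *\<^sub>R u"
  shows "mat_pow (X::'n::finite mat) k *v u = (c ^ k) *\<^sub>R u"
proof (induction k)
  case (Suc k)
  have "mat_pow X (Suc k) *v u = X *v (mat_pow X k *v u)"
    by (simp add: matrix_vector_mul_assoc)
  also have "\<dots> = (c ^ Suc k) *\<^sub>R u"
    using Suc assms by (simp add: matrix_vector_mult_scaleR)
  finally show ?case .
qed simp

lemma mat_exp_eigenvector: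
  assumes "X *v u = c *\<^sub>R u"
  shows "mat_exp (X::'n::finite mat) *v u = exp c *\<^sub>R u"
proof -
  have apply_linear: "bounded_linear (\<lambda>A::'n mat. A *v u)"
    by (rule bounded_linear_intro[where K = "norm u"])
       (simp_all add: matrix_vector_mult_add_rdistrib scaleR_matrix_vector_assoc norm_matrix_vector_mult_le)
  have "mat_exp X *v u = (\<Sum>k. ((1 / fact k) *\<^sub>R mat_pow X k) *v u)"
    unfolding mat_exp_def by (rule bounded_linear.suminf[OF apply_linear summable_mat_exp])
  also have "\<dots> = (\<Sum>k. (c ^ k /\<^sub>R fact k) *\<^sub>R u)"
    by (simp only: scaleR_matrix_vector_assoc[symmetric] mat_pow_eigenvector[OF assms])
       (simp add: divide_inverse_commute)
  also have "\<dots> = exp c *\<^sub>R u"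
    unfolding exp_def by (rule suminf_scaleR_left[symmetric]) (rule summable_exp_generic)
  finally show ?thesis .
qed

lemma mat_exp_zero: "mat_exp (0::'n::finite mat) = mat 1"
proof -
  have "(\<lambda>k. (1 / fact k) *\<^sub>R mat_pow (0::'n mat) k) = (\<lambda>k. if k = 0 then mat 1 else 0)"
    by (rule ext, case_tac k) simp_all
  then show ?thesis
    unfolding mat_exp_def using sums_single[of 0 "\<lambda>_. mat 1 :: 'n mat"] by (simp add: sums_iff)
qed

lemma symmetric_matrix_inner:
  assumes "transpose X = X"
  shows "(X *v x) \<bullet> y = x \<bullet> (X *v (y::real^'n))"
proof -
  have "(X *v x) \<bullet> y = (x v* transpose X) \<bullet> y" by simp
  also have "\<dots> = x \<bullet> (X *v y)" using assms by (simp add: dot_lmul_matrix)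
  finally show ?thesis .
qed

lemma eigenvectors_orthogonal:
  assumes sym: "transpose X = X"
    and a: "X *v a = c *\<^sub>R a" and b: "X *v b = d *\<^sub>R b" and "c \<noteq> d"
  shows "a \<bullet> (b::real^'n) = 0"
proof -
  have "c * (a \<bullet> b) = (X *v a) \<bullet> b" using a by simp
  also have "\<dots> = a \<bullet> (X *v b)" by (rule symmetric_matrix_inner[OF sym])
  also have "\<dots> = d * (a \<bullet> b)" using b by simp
  finally have "(c - d) * (a \<bullet> b) = 0" by (simp add: algebra_simps)
  then show ?thesis using \<open>c \<noteq> d\<close> by simp
qed

(* First-order condition at a maximum: a quadratic 2ta + t^2 b that is
   nowhere positive has vanishing linear coefficient. *)
lemma linear_coefficient_vanishes:
  fixes a b :: real
  assumes "\<And>t. 2*t*a + t^2*b \<le> 0"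
  shows "a = 0"
proof -
  define d where "d = \<bar>b\<bar> + 1"
  have d: "d > 0" by (simp add: d_def)
  have "2*(a/d)*a + (a/d)^2*b \<le> 0" by (rule assms)
  then have "(2*(a/d)*a + (a/d)^2*b) * d^2 \<le> 0" by (simp add: mult_nonpos_nonneg)
  moreover have "a^2 * (2*d + b) = (2*(a/d)*a + (a/d)^2*b) * d^2"
    using d by (simp add: field_simps power2_eq_square)
  ultimately have "a^2 * (2*d + b) \<le> 0" by simp
  moreover have "2*d + b > 0" by (cases "b \<ge> 0") (simp_all add: d_def)
  ultimately have "a^2 \<le> 0" by (simp add: mult_le_0_iff)
  then show ?thesis by simp
qed

(* A maximiser u of the quadratic form on the unit sphere of an invariant
   subspace S is an eigenvector: X u - <u, X u> u lies in S, is orthogonal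
   to u, and by the first-order condition also orthogonal to itself. *)
lemma symmetric_matrix_has_eigenvector:
  fixes X :: "real^'n^'n"
  assumes sym: "transpose X = X" and S: "subspace S" and invariant: "\<forall>x\<in>S. X *v x \<in> S"
    and nonzero: "\<exists>x\<in>S. x \<noteq> 0"
  shows "\<exists>u\<in>S. u \<noteq> 0 \<and> (\<exists>c. X *v u = c *\<^sub>R u)"
proof -
  define q where "q x = x \<bullet> (X *v x)" for x
  define K where "K = S \<inter> sphere 0 1"
  have compact: "compact K" unfolding K_def using closed_subspace[OF S] compact_sphere by blast
  obtain x0 where x0: "x0 \<in> S" "x0 \<noteq> 0" using nonzero by blast
  then have "(1 / norm x0) *\<^sub>R x0 \<in> K" unfolding K_def using S by (simp add: subspace_scale)
  then have nonempty: "K \<noteq> {}" by blast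
  have "continuous_on K q" unfolding q_def
    by (intro continuous_on_inner continuous_on_id linear_continuous_on) (simp add: linear_conv_bounded_linear)
  then obtain u where uK: "u \<in> K" and umax: "\<And>y. y \<in> K \<Longrightarrow> q y \<le> q u"
    using continuous_attains_sup[OF compact nonempty] by blast
  define l where "l = q u"
  have uS: "u \<in> S" and uu: "u \<bullet> u = 1" using uK by (auto simp: K_def norm_eq_1)
  have bound: "q y \<le> l * (y \<bullet> y)" if "y \<in> S" for y
  proof (cases "y = 0")
    case False
    define z where "z = (1 / norm y) *\<^sub>R y"
    have "z \<in> K" unfolding K_def z_def using \<open>y \<in> S\<close> S False by (simp add: subspace_scale)
    then have "q z \<le> l" using umax l_def by simp
    moreover have "q z = q y / (norm y)^2"
      by (simp add: q_def z_def matrix_vector_mult_scaleR power2_eq_square)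
    ultimately have "q y \<le> l * (norm y)^2" using False by (simp add: divide_le_eq)
    then show ?thesis by (simp add: power2_norm_eq_inner)
  qed (simp add: q_def)
  have stationary: "y \<bullet> (X *v u) = 0" if "y \<in> S" "y \<bullet> u = 0" for y
  proof (rule linear_coefficient_vanishes[where b = "q y - l * (y \<bullet> y)"])
    fix t :: real
    have cross: "u \<bullet> (X *v y) = y \<bullet> (X *v u)"
      using symmetric_matrix_inner[OF sym, of y u] by (simp add: inner_commute)
    have "q (u + t *\<^sub>R y)
        = q u + t * (u \<bullet> (X *v y)) + t * (y \<bullet> (X *v u)) + t * (t * q y)"
      by (simp add: q_def matrix_vector_right_distrib matrix_vector_mult_scaleR
          inner_add_left inner_add_right distrib_left)
    then have "q (u + t *\<^sub>R y) = l + 2*t*(y \<bullet> (X *v u)) + t^2 * q y"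
      by (simp only: cross) (simp add: l_def power2_eq_square algebra_simps)
    moreover have "(u + t *\<^sub>R y) \<bullet> (u + t *\<^sub>R y) = 1 + t^2 * (y \<bullet> y)"
      using uu \<open>y \<bullet> u = 0\<close> by (simp add: inner_add_left inner_add_right inner_commute power2_eq_square)
    moreover have "q (u + t *\<^sub>R y) \<le> l * ((u + t *\<^sub>R y) \<bullet> (u + t *\<^sub>R y))"
      using uS \<open>y \<in> S\<close> S by (intro bound) (simp add: subspace_add subspace_scale)
    ultimately show "2*t*(y \<bullet> (X *v u)) + t^2 * (q y - l * (y \<bullet> y)) \<le> 0"
      by (simp add: algebra_simps)
  qed
  define y where "y = X *v u - l *\<^sub>R u"
  have "y \<in> S" unfolding y_def using invariant uS S by (simp add: subspace_diff subspace_scale)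
  moreover have "y \<bullet> u = 0"
    using uu inner_commute[of "X *v u" u] by (simp add: y_def inner_diff_left l_def q_def)
  ultimately have "y \<bullet> (X *v u) = 0" by (rule stationary)
  then have "y \<bullet> y = 0" using \<open>y \<bullet> u = 0\<close> by (simp add: y_def inner_diff_right)
  then have "X *v u = l *\<^sub>R u" by (simp add: y_def)
  moreover have "u \<noteq> 0" using uu by auto
  ultimately show ?thesis using uS by blast
qed

(* The eigenvectors of a symmetric matrix span: their span is invariant, so
   is its orthogonal complement by symmetry, and a nonzero invariant
   complement would contain an eigenvector orthogonal to itself. *)
lemma symmetric_matrix_eigenvectors_span:
  fixes X :: "real^'n^'n"
  assumes sym: "transpose X = X"
  shows "span {w. \<exists>c. X *v w = c *\<^sub>R w} = UNIV"
proof -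
  define E where "E = {w. \<exists>c. X *v w = c *\<^sub>R w}"
  have "(\<lambda>x. X *v x) ` E \<subseteq> E"
    unfolding E_def by (auto simp: matrix_vector_mult_scaleR)
  then have span_invariant: "X *v w \<in> span E" if "w \<in> span E" for w
  proof -
    have "X *v w \<in> span ((\<lambda>x. X *v x) ` E)"
      using that span_linear_image[OF matrix_vector_mul_linear[of X], of E] by blast
    then show ?thesis using span_mono[OF \<open>(\<lambda>x. X *v x) ` E \<subseteq> E\<close>] by blast
  qed
  define S where "S = {z. \<forall>w \<in> span E. orthogonal w z}"
  have "subspace S" unfolding S_def by (rule subspace_orthogonal_to_vectors)
  have S_invariant: "X *v z \<in> S" if "z \<in> S" for z
  proof -
    have "w \<bullet> (X *v z) = 0" if "w \<in> span E" for w
      using symmetric_matrix_inner[OF sym, of w z] span_invariant[OF that] \<open>z \<in> S\<close>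
      unfolding S_def orthogonal_def by simp
    then show ?thesis unfolding S_def orthogonal_def by blast
  qed
  have complement_trivial: "z = 0" if "z \<in> S" for z
  proof (rule ccontr)
    assume "z \<noteq> 0"
    then obtain u c where "u \<in> S" "u \<noteq> 0" "X *v u = c *\<^sub>R u"
      using symmetric_matrix_has_eigenvector[OF sym \<open>subspace S\<close>] S_invariant \<open>z \<in> S\<close> by blast
    then have "u \<in> span E" by (intro span_base) (auto simp: E_def)
    then have "u \<bullet> u = 0" using \<open>u \<in> S\<close> unfolding S_def orthogonal_def by blast
    then show False using \<open>u \<noteq> 0\<close> by simp
  qed
  have "x \<in> span E" for x
  proof -
    obtain y z where "y \<in> span E" "\<And>w. w \<in> span E \<Longrightarrow> orthogonal z w" "x = y + z"
      using orthogonal_subspace_decomp_exists[of E x] by metis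
    moreover from this(2) have "z \<in> S" unfolding S_def by (simp add: orthogonal_commute)
    ultimately show ?thesis using complement_trivial[of z] by simp
  qed
  then show ?thesis unfolding E_def by blast
qed

definition eigen_decomposition :: "'n::finite mat \<Rightarrow> real^'n \<Rightarrow> real set \<Rightarrow> (real \<Rightarrow> real^'n) \<Rightarrow> bool" where
  "eigen_decomposition X v C w \<longleftrightarrow>
     finite C \<and> (\<forall>c\<in>C. X *v w c = c *\<^sub>R w c \<and> w c \<noteq> 0) \<and> v = (\<Sum>c\<in>C. w c)"

(* Write v as a combination of eigenvectors, group the terms by eigenvalue,
   and discard the eigenvalues whose group sums to zero. *)
lemma eigen_decomposition_exists:
  fixes X :: "real^'n^'n"
  assumes "transpose X = X"
  shows "\<exists>C w. eigen_decomposition X v C w"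
proof -
  define E where "E = {w. \<exists>c. X *v w = c *\<^sub>R w}"
  have "v \<in> span E" using symmetric_matrix_eigenvectors_span[OF assms] by (simp add: E_def)
  then obtain T r where T: "finite T" "T \<subseteq> E" and v: "v = (\<Sum>u\<in>T. r u *\<^sub>R u)"
    by (auto simp: span_explicit)
  define e where "e u = (SOME c. X *v u = c *\<^sub>R u)" for u
  have e: "X *v u = e u *\<^sub>R u" if "u \<in> T" for u
  proof -
    have "\<exists>c. X *v u = c *\<^sub>R u" using T(2) that by (auto simp: E_def)
    then show ?thesis unfolding e_def by (rule someI_ex)
  qed
  define w where "w c = (\<Sum>u\<in>{u\<in>T. e u = c}. r u *\<^sub>R u)" for c
  have eigen: "X *v w c = c *\<^sub>R w c" for c
  proof -
    have "X *v w c = (\<Sum>u\<in>{u\<in>T. e u = c}. r u *\<^sub>R (X *v u))"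
      unfolding w_def by (simp add: linear_sum[OF matrix_vector_mul_linear] matrix_vector_mult_scaleR)
    also have "\<dots> = (\<Sum>u\<in>{u\<in>T. e u = c}. c *\<^sub>R (r u *\<^sub>R u))"
      by (rule sum.cong) (simp_all add: e)
    finally show ?thesis by (simp add: w_def scaleR_sum_right)
  qed
  define C where "C = {c \<in> e ` T. w c \<noteq> 0}"
  have "v = (\<Sum>c\<in>e ` T. w c)" unfolding v w_def using T(1) by (rule sum.image_gen)
  also have "\<dots> = (\<Sum>c\<in>C. w c)"
    by (rule sum.mono_neutral_right) (auto simp: C_def T(1))
  finally have "eigen_decomposition X v C w"
    using T(1) eigen by (simp add: eigen_decomposition_def C_def)
  then show ?thesis by blast
qed

(* The components of an eigen-decomposition of a symmetric matrix are
   orthogonal, so rescaling them gives Pythagoras' identity. *)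
lemma eigen_decomposition_norm_squared:
  assumes sym: "transpose X = X" and dec: "eigen_decomposition X v C w"
  shows "norm (\<Sum>c\<in>C. f c *\<^sub>R w c) ^ 2 = (\<Sum>c\<in>C. (f c)^2 * norm (w c) ^ 2)"
proof -
  have "pairwise (\<lambda>c d. orthogonal (f c *\<^sub>R w c) (f d *\<^sub>R w d)) C"
    using dec eigenvectors_orthogonal[OF sym]
    by (auto simp: pairwise_def orthogonal_def eigen_decomposition_def)
  then show ?thesis
    using dec by (simp add: norm_sum_Pythagorean eigen_decomposition_def power_mult_distrib)
qed

(* The eigenvalues relevant for v are exactly those occurring in its
   eigen-decomposition: v has component w_c on the c-eigenspace and is
   orthogonal to every eigenvector whose eigenvalue is not in C. *)
lemma relevant_eigenvalues_eq:
  assumes sym: "transpose X = X" and dec: "eigen_decomposition X v C w"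
  shows "relevant_eigenvalues X v = C"
proof -
  have finite: "finite C" and eigen: "\<And>c. c \<in> C \<Longrightarrow> X *v w c = c *\<^sub>R w c \<and> w c \<noteq> 0"
    and v: "v = (\<Sum>c\<in>C. w c)"
    using dec by (auto simp: eigen_decomposition_def)
  have pairing: "v \<bullet> u = (if d \<in> C then w d \<bullet> u else 0)" if "X *v u = d *\<^sub>R u" for u d
  proof -
    have "v \<bullet> u = (\<Sum>c\<in>C. if c = d then w c \<bullet> u else 0)"
      unfolding v inner_sum_left
      by (rule sum.cong) (use eigen eigenvectors_orthogonal[OF sym _ that] in auto)
    then show ?thesis using finite by simp
  qed
  show ?thesis
  proof (intro set_eqI iffI)
    fix d assume "d \<in> relevant_eigenvalues X v"
    then obtain u where u: "X *v u = d *\<^sub>R u" and "v \<bullet> u \<noteq> 0"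
      by (auto simp: relevant_eigenvalues_def)
    then show "d \<in> C" using pairing[OF u] by (simp split: if_splits)
  next
    fix d assume "d \<in> C"
    then have "v \<bullet> w d = w d \<bullet> w d" using pairing[of "w d" d] eigen by simp
    then show "d \<in> relevant_eigenvalues X v"
      using eigen[OF \<open>d \<in> C\<close>] by (auto simp: relevant_eigenvalues_def)
  qed
qed

lemma lambda_X_eigen_decomposition:
  assumes sym: "transpose X = X" and dec: "eigen_decomposition X v C w" and "v \<noteq> 0"
  shows "lambda_X X v \<in> C" and "\<And>c. c \<in> C \<Longrightarrow> c \<le> lambda_X X v"
proof -
  have "finite C" "C \<noteq> {}" using dec \<open>v \<noteq> 0\<close> by (auto simp: eigen_decomposition_def)
  then show "lambda_X X v \<in> C" and "\<And>c. c \<in> C \<Longrightarrow> c \<le> lambda_X X v"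
    unfolding lambda_X_def relevant_eigenvalues_eq[OF sym dec] by auto
qed

lemma eigenvalue_abs_le_norm:
  assumes "X *v u = c *\<^sub>R u" and "u \<noteq> 0"
  shows "\<bar>c\<bar> \<le> norm (X::real^'n^'n)"
proof -
  have "\<bar>c\<bar> * norm u \<le> norm X * norm u"
    using norm_matrix_vector_mult_le[of X u] assms(1) by simp
  then show ?thesis using assms(2) by simp
qed

lemma lambda_X_le_norm:
  assumes sym: "transpose X = X" and "v \<noteq> 0"
  shows "lambda_X X v \<le> norm X"
proof -
  obtain C w where dec: "eigen_decomposition X v C w" using eigen_decomposition_exists[OF sym] by blast
  have "lambda_X X v \<in> C" by (rule lambda_X_eigen_decomposition(1)[OF sym dec \<open>v \<noteq> 0\<close>])
  then have "\<bar>lambda_X X v\<bar> \<le> norm X"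
    using dec by (intro eigenvalue_abs_le_norm) (auto simp: eigen_decomposition_def)
  then show ?thesis by simp
qed

(* If X v is nonzero and exp(X) does not shrink v, then X has a positive
   eigenvalue relevant for v: were all of them nonpositive, one would be
   negative, and exp(X) would strictly shrink the corresponding component of v
   while not enlarging the others. *)
lemma lambda_X_pos:
  assumes sym: "transpose X = X" and moves: "X *v v \<noteq> 0"
    and not_shrunk: "norm v \<le> norm (mat_exp X *v v)"
  shows "0 < lambda_X X v"
proof (rule ccontr)
  assume "\<not> 0 < lambda_X X v"
  obtain C w where dec: "eigen_decomposition X v C w" using eigen_decomposition_exists[OF sym] by blast
  have finite: "finite C" and eigen: "\<And>c. c \<in> C \<Longrightarrow> X *v w c = c *\<^sub>R w c \<and> w c \<noteq> 0"
    and v: "v = (\<Sum>c\<in>C. w c)"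
    using dec by (auto simp: eigen_decomposition_def)
  have "v \<noteq> 0" using moves by auto
  have nonpos: "c \<le> 0" if "c \<in> C" for c
    using lambda_X_eigen_decomposition(2)[OF sym dec \<open>v \<noteq> 0\<close> that] \<open>\<not> 0 < lambda_X X v\<close> by simp
  have "X *v v = (\<Sum>c\<in>C. c *\<^sub>R w c)"
    unfolding v by (simp add: linear_sum[OF matrix_vector_mul_linear] eigen)
  then obtain c0 where c0: "c0 \<in> C" "c0 < 0"
    using moves nonpos by (metis (no_types, lifting) order_less_le scaleR_zero_left sum.neutral)
  have "mat_exp X *v v = (\<Sum>c\<in>C. exp c *\<^sub>R w c)"
    unfolding v by (simp add: linear_sum[OF matrix_vector_mul_linear] mat_exp_eigenvector eigen)
  then have "norm (mat_exp X *v v) ^ 2 = (\<Sum>c\<in>C. (exp c)^2 * norm (w c) ^ 2)"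
    by (simp add: eigen_decomposition_norm_squared[OF sym dec])
  also have "\<dots> < (\<Sum>c\<in>C. norm (w c) ^ 2)"
  proof (rule sum_strict_mono_ex1[OF finite])
    show "\<forall>c\<in>C. (exp c)^2 * norm (w c) ^ 2 \<le> norm (w c) ^ 2"
      using nonpos by (simp add: mult_left_le_one_le power_le_one)
    show "\<exists>c\<in>C. (exp c)^2 * norm (w c) ^ 2 < norm (w c) ^ 2"
      using c0 eigen[OF c0(1)] by (intro bexI[OF _ c0(1)]) (simp add: power_less_one_iff)
  qed
  also have "\<dots> = norm v ^ 2"
    using eigen_decomposition_norm_squared[OF sym dec, of "\<lambda>_. 1"] by (simp add: v)
  finally have "norm (mat_exp X *v v) < norm v" by (rule power_less_imp_less_base) simp
  then show False using not_shrunk by simp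
qed

(* An element of P_tilde that kills v lies in G_v, hence is orthogonal to itself. *)
lemma P_tilde_moves_vector:
  assumes "X \<in> P_tilde G v" and "mat 1 \<in> G" and "X *v v = 0"
  shows "X = 0"
proof -
  have "0 \<in> lie_K G"
    using \<open>mat 1 \<in> G\<close> by (simp add: lie_K_def lie_alg_def mat_exp_zero transpose_def vec_eq_iff)
  moreover have "X \<in> lie_stab G v"
    using assms(1,3) by (simp add: P_tilde_def lie_P_def lie_stab_def)
  ultimately have "mat_inner X (0 + X) = 0" using assms(1) by (auto simp: P_tilde_def)
  then have "norm X = 0" using mat_norm_eq_norm[of X] by (simp add: mat_norm_def)
  then show ?thesis by simp
qed

theorem proposition7p6:
  fixes G :: "(real^'n^'n) set" and v :: "real^'n"
  assumes "closed_subgroup_GL G"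
    and "connected G"
    and "self_adjoint_set G"
    and "\<not> compact G"
    and "v \<noteq> 0"
    and "minimal_vector G v"
    and "\<not> bounded ((\<lambda>g. g *v v) ` G)"
  shows "\<forall>X\<in>P_tilde G v. mat_norm X = 1 \<longrightarrow> 0 < lambda_X X v \<and> lambda_X X v \<le> 1"
proof (intro ballI impI conjI)
  fix X assume X: "X \<in> P_tilde G v" and unit: "mat_norm X = 1"
  have sym: "transpose X = X" and "\<forall>t. mat_exp (t *\<^sub>R X) \<in> G"
    using X by (auto simp: P_tilde_def lie_P_def lie_alg_def)
  then have "mat_exp X \<in> G" by (metis scaleR_one)
  then have not_shrunk: "norm v \<le> norm (mat_exp X *v v)"
    using assms(6) by (simp add: minimal_vector_def)
  have "mat 1 \<in> G" using assms(1) by (simp add: closed_subgroup_GL_def)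
  then have "X *v v \<noteq> 0" using P_tilde_moves_vector[OF X] unit by (auto simp: mat_norm_eq_norm)
  then show "0 < lambda_X X v" using lambda_X_pos[OF sym _ not_shrunk] by blast
  show "lambda_X X v \<le> 1" using lambda_X_le_norm[OF sym assms(5)] unit by (simp add: mat_norm_eq_norm)
qed

end
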